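(* Let $\mathsf{B}\in\mathrm{IQC}(n,\mathbb{C})$. Then $\mathsf{B}$ admits an isotropic $2$-decomposition if and only if the period of $\mathsf{B}$ is even.
   Context: $\mathrm{D}(n,\mathbb{C})$ is the set of $n\times n$ positive semidefinite complex matrices of trace $1$. $\mathrm{IQC}(n,\mathbb{C})$ is the set of finite sets $\mathsf{B}\subseteq\mathrm{M}(n,\mathbb{C})$ with $\sum_{B\in\mathsf{B}}B^\dagger B=I$ such that $\rho\mapsto\sum_{B\in\mathsf{B}}B\rho B^\dagger$ has a unique fixed point in $\mathrm{D}(n,\mathbb{C})$, which is positive definite. An isotropic $2$-decomposition of $\mathsf{B}$ is an orthogonal direct sum decomposition $\mathbb{C}^n=U_1\oplus U_2$ into nonzero subspaces with $u^\dagger Bu'=0$ for all $u,u'\in U_i$, $B\in\mathsf{B}$, $i=1,2$. The period of $\mathsf{B}$ is the maximum integer $m$ for which there is an orthogonal direct sum decomposition $\mathbb{C}^n=U_1\oplus\cdots\oplus U_m$ into nonzero subspaces such that $B(U_{i-1})\le U_i$ for all $i\in[m]$ and all $B\in\mathsf{B}$, indices taken cyclically modulo $m$ in $[m]$. *)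

theory Defs
  imports "HOL-Analysis.Analysis"
begin

definition cinner :: "complex^'n \<Rightarrow> complex^'n \<Rightarrow> complex" where
  "cinner u v = (\<Sum>i\<in>UNIV. cnj (u$i) * v$i)"

definition adj :: "complex^'n^'n \<Rightarrow> complex^'n^'n" where
  "adj A = (\<chi> i j. cnj (A$j$i))"

definition ctrace :: "complex^'n^'n \<Rightarrow> complex" where
  "ctrace A = (\<Sum>i\<in>UNIV. A$i$i)"

definition psd :: "complex^'n^'n \<Rightarrow> bool" where
  "psd A \<longleftrightarrow> (\<forall>x. Im (cinner x (A *v x)) = 0 \<and> 0 \<le> Re (cinner x (A *v x)))"

definition posdef :: "complex^'n^'n \<Rightarrow> bool" where
  "posdef A \<longleftrightarrow> (\<forall>x. Im (cinner x (A *v x)) = 0 \<and> (x \<noteq> 0 \<longrightarrow> 0 < Re (cinner x (A *v x))))"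

definition density :: "(complex^'n^'n) set" where
  "density = {\<rho>. psd \<rho> \<and> ctrace \<rho> = 1}"

definition channel :: "(complex^'n^'n) set \<Rightarrow> complex^'n^'n \<Rightarrow> complex^'n^'n" where
  "channel Bs \<rho> = (\<Sum>B\<in>Bs. B ** \<rho> ** adj B)"

definition IQC :: "(complex^'n^'n) set \<Rightarrow> bool" where
  "IQC Bs \<longleftrightarrow> finite Bs \<and> (\<Sum>B\<in>Bs. adj B ** B) = mat 1
     \<and> (\<exists>!\<rho>. \<rho> \<in> density \<and> channel Bs \<rho> = \<rho>)
     \<and> (\<forall>\<rho>. \<rho> \<in> density \<and> channel Bs \<rho> = \<rho> \<longrightarrow> posdef \<rho>)"

definition csubspace :: "(complex^'n) set \<Rightarrow> bool" where
  "csubspace U \<longleftrightarrow> 0 \<in> U \<and> (\<forall>x\<in>U. \<forall>y\<in>U. x + y \<in> U) \<and> (\<forall>c. \<forall>x\<in>U. c *s x \<in> U)"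

definition orth_decomp :: "nat \<Rightarrow> (nat \<Rightarrow> (complex^'n) set) \<Rightarrow> bool" where
  "orth_decomp m U \<longleftrightarrow>
     (\<forall>i<m. csubspace (U i) \<and> U i \<noteq> {0}) \<and>
     (\<forall>i<m. \<forall>j<m. i \<noteq> j \<longrightarrow> (\<forall>u\<in>U i. \<forall>v\<in>U j. cinner u v = 0)) \<and>
     (\<forall>x. \<exists>u. (\<forall>i<m. u i \<in> U i) \<and> x = (\<Sum>i<m. u i))"

definition isotropic_2_decomp :: "(complex^'n^'n) set \<Rightarrow> bool" where
  "isotropic_2_decomp Bs \<longleftrightarrow> (\<exists>U. orth_decomp 2 U \<and>
     (\<forall>i<2. \<forall>u\<in>U i. \<forall>u'\<in>U i. \<forall>B\<in>Bs. cinner u (B *v u') = 0))"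

text \<open>Cyclic decomposition: B(U_{i-1}) <= U_i, indices mod m (here 0-based).\<close>
definition cyclic_decomp :: "(complex^'n^'n) set \<Rightarrow> nat \<Rightarrow> bool" where
  "cyclic_decomp Bs m \<longleftrightarrow> (\<exists>U. orth_decomp m U \<and>
     (\<forall>i<m. \<forall>B\<in>Bs. \<forall>u\<in>U i. B *v u \<in> U (Suc i mod m)))"

definition period :: "(complex^'n^'n) set \<Rightarrow> nat" where
  "period Bs = (GREATEST m. cyclic_decomp Bs m)"

end

theory Submission
  imports Defs
begin

text \<open>
  If \<open>V 0 \<oplus> V 1\<close> is an isotropic 2-decomposition, every Kraus operator swaps \<open>V 0\<close> and
  \<open>V 1\<close>, so it is a cyclic decomposition of length 2. Conversely, grouping the summands of a
  cyclic decomposition of even length by the parity of their index gives an isotropic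
  2-decomposition.

  It remains to see that a cyclic decomposition \<open>V 0 \<oplus> V 1\<close> rules out an odd period \<open>p\<close>.
  Let \<open>U 0 \<oplus> \<dots> \<oplus> U (p - 1)\<close> be cyclic of maximal length, \<open>Q i\<close> the projection onto \<open>U (i mod p)\<close>
  and \<open>Y\<close> the grading that is \<open>1\<close> on \<open>V 0\<close> and \<open>-1\<close> on \<open>V 1\<close>. Then \<open>Y\<close> anticommutes with every
  Kraus operator \<open>B\<close>, and so does \<open>N k = \<Sum>i. Q (i + k) Y Q i\<close>; hence \<open>N k Y\<close> and its adjoint
  commute with all \<open>B\<close>. Irreducibility (uniqueness and faithfulness of the fixed state) leaves
  only scalars in this commutant, so \<open>N k = c k Y\<close>. Some \<open>c k\<close> is nonzero, so \<open>Y\<close> maps every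
  \<open>U i\<close> into \<open>U (i + k)\<close>; as \<open>Y\<^sup>2 = 1\<close> and \<open>p\<close> is odd, \<open>k = 0\<close>. Thus \<open>Y\<close> preserves every \<open>U i\<close>,
  and the subspaces \<open>U (r mod p) \<inter> V (r mod 2)\<close>, \<open>r < 2 p\<close>, form a cyclic decomposition of
  length \<open>2 p\<close>, contradicting maximality of \<open>p\<close>.
\<close>

section \<open>The sesquilinear form and adjoints\<close>

lemma cinner_add_right: "cinner u (v + w) = cinner u v + cinner u w"
  by (simp add: cinner_def sum.distrib distrib_left)

lemma cinner_add_left: "cinner (u + v) w = cinner u w + cinner v w"
  by (simp add: cinner_def sum.distrib distrib_right)

lemma cinner_diff_right: "cinner u (v - w) = cinner u v - cinner u w"
  by (simp add: cinner_def sum_subtractf right_diff_distrib)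

lemma cinner_diff_left: "cinner (u - v) w = cinner u w - cinner v w"
  by (simp add: cinner_def sum_subtractf left_diff_distrib)

lemma cinner_scale_right: "cinner u (c *s v) = c * cinner u v"
  by (simp add: cinner_def sum_distrib_left mult_ac)

lemma cinner_scale_left: "cinner (c *s u) v = cnj c * cinner u v"
  by (simp add: cinner_def sum_distrib_left mult_ac)

lemma cinner_neg_right: "cinner u (- v) = - cinner u v"
  by (simp add: cinner_def sum_negf)

lemma cinner_zero_right [simp]: "cinner u 0 = 0"
  by (simp add: cinner_def)

lemma cinner_zero_left [simp]: "cinner 0 u = 0"
  by (simp add: cinner_def)

lemma cinner_sum_right: "cinner u (\<Sum>i\<in>A. f i) = (\<Sum>i\<in>A. cinner u (f i))"
  by (simp add: cinner_def sum_distrib_left sum.swap[of _ A])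

lemma cinner_sum_left: "cinner (\<Sum>i\<in>A. f i) u = (\<Sum>i\<in>A. cinner (f i) u)"
  by (simp add: cinner_def sum_distrib_right sum.swap[of _ A])

lemma cinner_commute: "cinner v u = cnj (cinner u v)"
  by (simp add: cinner_def mult_ac)

lemma cinner_self: "cinner u u = of_real (\<Sum>i\<in>UNIV. (cmod (u$i))\<^sup>2)"
proof -
  have "cnj z * z = of_real ((cmod z)\<^sup>2)" for z
    by (subst complex_norm_square) (rule mult.commute)
  then show ?thesis
    by (simp add: cinner_def)
qed

lemma cinner_self_nonneg: "0 \<le> Re (cinner u u)" and Im_cinner_self [simp]: "Im (cinner u u) = 0"
  by (simp_all add: cinner_self sum_nonneg)

lemma cinner_self_eq_0 [simp]: "cinner u u = 0 \<longleftrightarrow> u = 0"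
proof
  assume "cinner u u = 0"
  then have "(\<Sum>i\<in>UNIV. (cmod (u$i))\<^sup>2) = 0"
    by (metis cinner_self of_real_eq_0_iff)
  then have "\<forall>i. u$i = 0"
    by (simp add: sum_nonneg_eq_0_iff)
  then show "u = 0"
    by (simp add: vec_eq_iff)
qed simp

lemma cinner_eqI: "(\<And>x. cinner x u = cinner x v) \<Longrightarrow> u = v"
  by (metis cinner_diff_right cinner_self_eq_0 eq_iff_diff_eq_0)

lemma cinner_adj: "cinner u (A *v v) = cinner (adj A *v u) v"
proof -
  have "cinner u (A *v v) = (\<Sum>i\<in>UNIV. \<Sum>j\<in>UNIV. cnj (u$i) * (A$i$j * v$j))"
    by (simp add: cinner_def matrix_vector_mult_def sum_distrib_left)
  also have "\<dots> = (\<Sum>j\<in>UNIV. \<Sum>i\<in>UNIV. cnj (u$i) * (A$i$j * v$j))"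
    by (rule sum.swap)
  also have "\<dots> = cinner (adj A *v u) v"
    by (simp add: cinner_def adj_def matrix_vector_mult_def sum_distrib_left sum_distrib_right mult_ac)
  finally show ?thesis .
qed

lemma adj_adj [simp]: "adj (adj A) = A"
  by (simp add: adj_def vec_eq_iff)

lemma cinner_adj_left: "cinner (A *v u) v = cinner u (adj A *v v)"
  using cinner_adj[of u "adj A" v] by simp

lemma adj_add: "adj (A + B) = adj A + adj B"
  by (simp add: adj_def vec_eq_iff)

lemma adj_diff: "adj (A - B) = adj A - adj B"
  by (simp add: adj_def vec_eq_iff)

lemma adj_mat: "adj (mat c) = mat (cnj c)"
  by (simp add: adj_def vec_eq_iff mat_def)

lemma adj_matrix_mult: "adj (A ** B) = adj B ** adj A"
  by (simp add: adj_def vec_eq_iff matrix_matrix_mult_def mult_ac)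

lemma matrix_eqI: "(\<And>x. A *v x = B *v x) \<Longrightarrow> A = B"
  by (simp add: matrix_eq)

lemma mat_vector_mult: "mat c *v x = c *s x"
  by (simp add: vec_eq_iff matrix_vector_mult_def mat_def if_distrib if_distribR cong: if_cong)

lemma mat_matrix_mult_vector: "(mat c ** A) *v x = c *s (A *v x)"
  by (simp add: matrix_vector_mul_assoc[symmetric] mat_vector_mult)

lemma mat_matrix_mult_add: "mat a ** A + mat b ** A = mat (a + b) ** A"
  by (rule matrix_eqI) (simp add: matrix_vector_mult_add_rdistrib mat_matrix_mult_vector)

lemma mat_matrix_mult_commute: "mat c ** A = A ** mat (c::complex)"
  by (rule matrix_eqI) (simp add: matrix_vector_mul_assoc[symmetric] mat_vector_mult vector_scalar_commute)

lemma matrix_add_rdistrib: "(A + B) ** C = A ** C + B ** C"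
  by (rule matrix_eqI) (simp add: matrix_vector_mul_assoc[symmetric] matrix_vector_mult_add_rdistrib)

lemma matrix_sum_vector_mult: "(\<Sum>i\<in>S. f i) *v x = (\<Sum>i\<in>S. f i *v x)"
  by (induct S rule: infinite_finite_induct) (auto simp: matrix_vector_mult_add_rdistrib)

lemma matrix_mult_sum_left: "(\<Sum>i\<in>S. f i) ** A = (\<Sum>i\<in>S. f i ** A)"
  by (rule matrix_eqI) (simp add: matrix_vector_mul_assoc[symmetric] matrix_sum_vector_mult)

lemma matrix_mult_sum_right: "A ** (\<Sum>i\<in>S. f i) = (\<Sum>i\<in>S. A ** f i)"
  by (induct S rule: infinite_finite_induct) (auto simp: matrix_add_ldistrib)

lemma kraus_ex_nonzero:
  assumes "(\<Sum>B\<in>Bs. adj B ** B) = mat 1" and "x \<noteq> 0"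
  shows "\<exists>B\<in>Bs. B *v x \<noteq> 0"
proof (rule ccontr)
  assume "\<not> ?thesis"
  then have "(\<Sum>B\<in>Bs. cinner (B *v x) (B *v x)) = 0"
    by simp
  moreover have "(\<Sum>B\<in>Bs. cinner (B *v x) (B *v x)) = cinner x x"
  proof -
    have "(\<Sum>B\<in>Bs. cinner (B *v x) (B *v x)) = (\<Sum>B\<in>Bs. cinner x ((adj B ** B) *v x))"
      by (simp add: cinner_adj_left matrix_vector_mul_assoc)
    also have "\<dots> = cinner x x"
      using assms(1) by (simp add: cinner_sum_right[symmetric] matrix_sum_vector_mult[symmetric])
    finally show ?thesis .
  qed
  ultimately show False
    using assms(2) by simp
qed

section \<open>Orthogonal decompositions\<close>

lemma sum_eq_single:
  assumes "finite A" and "i \<in> A" and "\<And>j. j \<in> A \<Longrightarrow> j \<noteq> i \<Longrightarrow> f j = 0"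
  shows "sum f A = f i"
  using assms by (simp add: sum.remove[OF assms(1,2)] sum.neutral)

abbreviation clinear :: "(complex^'n \<Rightarrow> complex^'n) \<Rightarrow> bool" where
  "clinear \<equiv> Vector_Spaces.linear (*s) (*s)"

lemma clinearI:
  assumes "\<And>x y. f (x + y) = f x + f y" and "\<And>c x. f (c *s x) = c *s f x"
  shows "clinear f"
  using assms by (simp add: Vector_Spaces.linear_iff vec.vector_space_axioms)

lemma csubspace_iff: "csubspace U \<longleftrightarrow> vec.subspace U"
  by (simp add: csubspace_def vec.subspace_def)

lemma orth_decomp_subspace: "orth_decomp m U \<Longrightarrow> i < m \<Longrightarrow> vec.subspace (U i)"
  by (simp add: orth_decomp_def csubspace_iff)

lemma orth_decomp_ex_nonzero:
  assumes "orth_decomp m U" and "i < m"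
  obtains u where "u \<in> U i" and "u \<noteq> 0"
proof -
  have "U i \<noteq> {0}" and "0 \<in> U i"
    using assms vec.subspace_0[OF orth_decomp_subspace[OF assms]] by (auto simp: orth_decomp_def)
  then show ?thesis
    using that by blast
qed

lemma orth_decomp_orthogonal:
  "orth_decomp m U \<Longrightarrow> i < m \<Longrightarrow> j < m \<Longrightarrow> i \<noteq> j \<Longrightarrow> a \<in> U i \<Longrightarrow> b \<in> U j \<Longrightarrow> cinner a b = 0"
  by (simp add: orth_decomp_def)

lemma orth_decomp_unique:
  assumes od: "orth_decomp m U" and u: "\<forall>j<m. u j \<in> U j" and w: "\<forall>j<m. w j \<in> U j"
    and eq: "(\<Sum>j<m. u j) = (\<Sum>j<m. w j)" and i: "i < m"
  shows "u i = w i"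
proof -
  define d where "d j = u j - w j" for j
  have d: "d j \<in> U j" if "j < m" for j
    using u w that by (simp add: d_def vec.subspace_diff orth_decomp_subspace[OF od])
  have "cinner (d i) (d i) = (\<Sum>j<m. cinner (d i) (d j))"
    using i d orth_decomp_orthogonal[OF od] by (intro sum_eq_single[symmetric]) auto
  also have "\<dots> = cinner (d i) (\<Sum>j<m. d j)"
    by (simp add: cinner_sum_right)
  also have "(\<Sum>j<m. d j) = 0"
    using eq by (simp add: d_def sum_subtractf)
  finally have "d i = 0"
    by simp
  then show ?thesis
    by (simp add: d_def)
qed

text \<open>Meaningful only when \<open>orth_decomp m U\<close> holds; otherwise the choice is arbitrary.\<close>
definition orth_comp :: "nat \<Rightarrow> (nat \<Rightarrow> (complex^'n) set) \<Rightarrow> nat \<Rightarrow> complex^'n \<Rightarrow> complex^'n" where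
  "orth_comp m U i x = (SOME u. (\<forall>j<m. u j \<in> U j) \<and> x = (\<Sum>j<m. u j)) i"

lemma orth_comp:
  assumes "orth_decomp m U"
  shows "\<forall>j<m. orth_comp m U j x \<in> U j" and "(\<Sum>j<m. orth_comp m U j x) = x"
proof -
  have "\<exists>u. (\<forall>j<m. u j \<in> U j) \<and> x = (\<Sum>j<m. u j)"
    using assms by (simp add: orth_decomp_def)
  from someI_ex[OF this] show "\<forall>j<m. orth_comp m U j x \<in> U j" "(\<Sum>j<m. orth_comp m U j x) = x"
    by (simp_all add: orth_comp_def[abs_def])
qed

lemma orth_comp_in: "orth_decomp m U \<Longrightarrow> j < m \<Longrightarrow> orth_comp m U j x \<in> U j"
  using orth_comp(1) by blast

lemmas orth_comp_sum = orth_comp(2)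

lemma orth_comp_eqI:
  assumes "orth_decomp m U" and "\<forall>j<m. u j \<in> U j" and "x = (\<Sum>j<m. u j)" and "i < m"
  shows "orth_comp m U i x = u i"
  using orth_decomp_unique[OF assms(1) orth_comp(1)[OF assms(1)] assms(2) _ assms(4)]
    orth_comp_sum[OF assms(1)] assms(3) by simp

lemma orth_comp_clinear:
  assumes od: "orth_decomp m U" and i: "i < m"
  shows "clinear (orth_comp m U i)"
proof (rule clinearI)
  show "orth_comp m U i (x + y) = orth_comp m U i x + orth_comp m U i y" for x y
    by (rule orth_comp_eqI[OF od _ _ i])
      (auto simp: orth_comp_in[OF od] orth_decomp_subspace[OF od] vec.subspace_add
        orth_comp_sum[OF od] sum.distrib)
  show "orth_comp m U i (c *s x) = c *s orth_comp m U i x" for c x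
    by (rule orth_comp_eqI[OF od _ _ i])
      (auto simp: orth_comp_in[OF od] orth_decomp_subspace[OF od] vec.subspace_scale
        orth_comp_sum[OF od] vec.scale_sum_right[symmetric])
qed

lemma orth_comp_of_mem:
  assumes od: "orth_decomp m U" and "j < m" and "y \<in> U j" and "i < m"
  shows "orth_comp m U i y = (if i = j then y else 0)"
  using assms vec.subspace_0[OF orth_decomp_subspace[OF od]]
  by (intro orth_comp_eqI[OF od]) auto

lemma cinner_orth_comp_right:
  assumes od: "orth_decomp m U" and "i < m" and "a \<in> U i"
  shows "cinner a y = cinner a (orth_comp m U i y)"
proof -
  have "cinner a y = (\<Sum>j<m. cinner a (orth_comp m U j y))"
    by (simp add: orth_comp_sum[OF od] flip: cinner_sum_right)
  also have "\<dots> = cinner a (orth_comp m U i y)"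
    using assms orth_comp_in[OF od] orth_decomp_orthogonal[OF od] by (intro sum_eq_single) auto
  finally show ?thesis .
qed

lemma cinner_orth_comp_left:
  assumes "orth_decomp m U" and "i < m" and "a \<in> U i"
  shows "cinner y a = cinner (orth_comp m U i y) a"
  using cinner_orth_comp_right[OF assms, of y] cinner_commute[of y a]
    cinner_commute[of "orth_comp m U i y" a] by simp

lemma orth_comp_self_adjoint:
  assumes od: "orth_decomp m U" and i: "i < m"
  shows "cinner (orth_comp m U i x) y = cinner x (orth_comp m U i y)"
  using cinner_orth_comp_right[OF od i orth_comp_in[OF od i], of x y]
    cinner_orth_comp_left[OF od i orth_comp_in[OF od i], of x y] by simp

lemma cinner_eq_sum_orth_comp:
  assumes od: "orth_decomp m U"
  shows "cinner x y = (\<Sum>i<m. cinner (orth_comp m U i x) (orth_comp m U i y))"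
proof -
  have "cinner x y = (\<Sum>i<m. cinner x (orth_comp m U i y))"
    by (simp add: orth_comp_sum[OF od] flip: cinner_sum_right)
  also have "\<dots> = (\<Sum>i<m. cinner (orth_comp m U i x) (orth_comp m U i y))"
    by (intro sum.cong refl cinner_orth_comp_left[OF od _ orth_comp_in[OF od]]) simp_all
  finally show ?thesis .
qed

lemma orth_comp_eq_0:
  assumes od: "orth_decomp m U" and i: "i < m" and "\<forall>a\<in>U i. cinner a y = 0"
  shows "orth_comp m U i y = 0"
proof -
  have "cinner (orth_comp m U i y) (orth_comp m U i y) = cinner (orth_comp m U i y) y"
    using cinner_orth_comp_right[OF od i orth_comp_in[OF od i]] by simp
  then show ?thesis
    using assms(3) orth_comp_in[OF od i] by simp
qed

lemma orth_comp_cyclic_shift: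
  assumes od: "orth_decomp m U" and cyc: "\<forall>i<m. \<forall>u\<in>U i. B *v u \<in> U (Suc i mod m)" and i: "i < m"
  shows "orth_comp m U (Suc i mod m) (B *v x) = B *v orth_comp m U i x"
proof -
  have "B *v x = (\<Sum>l<m. B *v orth_comp m U l x)"
    by (simp add: orth_comp_sum[OF od] flip: vec.sum)
  then have "orth_comp m U (Suc i mod m) (B *v x)
      = (\<Sum>l<m. orth_comp m U (Suc i mod m) (B *v orth_comp m U l x))"
    using vec.linear_sum[OF orth_comp_clinear[OF od], of "Suc i mod m"] i by simp
  also have "\<dots> = (\<Sum>l<m. if l = i then B *v orth_comp m U l x else 0)"
  proof (intro sum.cong refl)
    fix l assume "l \<in> {..<m}"
    moreover have "Suc i mod m = Suc l mod m \<longleftrightarrow> l = i"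
      using i \<open>l \<in> {..<m}\<close> by (auto simp: mod_Suc)
    ultimately show "orth_comp m U (Suc i mod m) (B *v orth_comp m U l x)
        = (if l = i then B *v orth_comp m U l x else 0)"
      using cyc orth_comp_in[OF od] i by (simp add: orth_comp_of_mem[OF od, of "Suc l mod m"])
  qed
  finally show ?thesis
    using i by simp
qed

section \<open>The period\<close>

lemma orth_decomp_le_DIM:
  assumes od: "orth_decomp m (U :: nat \<Rightarrow> (complex^'n) set)"
  shows "m \<le> DIM(complex^'n)"
proof -
  define v where "v i = (SOME u. u \<in> U i \<and> u \<noteq> 0)" for i
  have v: "v i \<in> U i" "v i \<noteq> 0" if "i < m" for i
    using someI_ex[of "\<lambda>u. u \<in> U i \<and> u \<noteq> 0"] orth_decomp_ex_nonzero[OF od that]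
    unfolding v_def by blast+
  have orth: "cinner (v i) (v j) = 0" if "i < m" "j < m" "i \<noteq> j" for i j
    using orth_decomp_orthogonal[OF od that] v that by blast
  have inj: "inj_on v {..<m}"
    by (rule inj_onI) (metis cinner_self_eq_0 lessThan_iff orth v(2))
  have "pairwise orthogonal (v ` {..<m})"
  proof (rule pairwiseI)
    fix x y assume "x \<in> v ` {..<m}" "y \<in> v ` {..<m}" "x \<noteq> y"
    then obtain i j where "i < m" "j < m" "i \<noteq> j" "x = v i" "y = v j"
      by auto
    then have "cinner x y = 0"
      using orth by blast
    moreover have "inner x y = Re (cinner x y)"
      by (simp add: inner_vec_def cinner_def inner_complex_def)
    ultimately show "orthogonal x y"
      by (simp add: orthogonal_def)
  qed
  moreover have "0 \<notin> v ` {..<m}"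
    using v by auto
  ultimately have "independent (v ` {..<m})"
    by (rule pairwise_orthogonal_independent)
  then have "card (v ` {..<m}) \<le> DIM(complex^'n)"
    by (rule independent_bound[THEN conjunct2])
  then show ?thesis
    using card_image[OF inj] by simp
qed

lemma cyclic_decomp_1: "cyclic_decomp Bs 1"
proof -
  have "axis undefined (1::complex) \<noteq> 0"
    by simp
  then have "orth_decomp 1 (\<lambda>_. UNIV :: (complex^'n) set)"
    unfolding orth_decomp_def csubspace_def by (auto intro!: exI[of _ "\<lambda>_. x" for x])
  then show ?thesis
    unfolding cyclic_decomp_def by blast
qed

lemma cyclic_decomp_le_DIM:
  fixes Bs :: "(complex^'n^'n) set"
  shows "cyclic_decomp Bs m \<Longrightarrow> m \<le> DIM(complex^'n)"
  unfolding cyclic_decomp_def using orth_decomp_le_DIM by blast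

lemma cyclic_decomp_le_period: "cyclic_decomp Bs m \<Longrightarrow> m \<le> period Bs"
  unfolding period_def by (rule Greatest_le_nat[OF _ cyclic_decomp_le_DIM])

lemma cyclic_decomp_period: "cyclic_decomp Bs (period Bs)"
  unfolding period_def
  by (rule GreatestI_nat[of "cyclic_decomp Bs", OF cyclic_decomp_1 cyclic_decomp_le_DIM])

lemma period_pos: "0 < period Bs"
  using cyclic_decomp_le_period[OF cyclic_decomp_1[of Bs]] by simp

section \<open>Isotropic 2-decompositions and even cyclic decompositions\<close>

definition parity_part :: "nat \<Rightarrow> (nat \<Rightarrow> (complex^'n) set) \<Rightarrow> nat \<Rightarrow> (complex^'n) set" where
  "parity_part m U j = {x. \<forall>i<m. i mod 2 \<noteq> j \<longrightarrow> orth_comp m U i x = 0}"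

lemma orth_decomp_parity_part:
  assumes od: "orth_decomp m U" and m: "2 \<le> m"
  shows "orth_decomp 2 (parity_part m U)"
  unfolding orth_decomp_def
proof (intro conjI allI impI ballI)
  fix j :: nat
  assume j: "j < 2"
  show "csubspace (parity_part m U j)"
  proof -
    have "parity_part m U j = (\<Inter>i\<in>{i. i < m \<and> i mod 2 \<noteq> j}. {x. orth_comp m U i x = 0})"
      by (auto simp: parity_part_def)
    moreover have "vec.subspace {x. orth_comp m U i x = 0}" if "i < m" for i
      by (rule vec.linear_subspace_kernel[OF orth_comp_clinear[OF od that]])
    ultimately show ?thesis
      by (simp add: csubspace_iff vec.subspace_Inter)
  qed
  obtain u where "u \<in> U j" "u \<noteq> 0"
    using orth_decomp_ex_nonzero[OF od, of j] j m by auto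
  moreover have "u \<in> parity_part m U j"
    using \<open>u \<in> U j\<close> j m by (auto simp: parity_part_def orth_comp_of_mem[OF od, of j])
  ultimately show "parity_part m U j \<noteq> {0}"
    by blast
next
  fix j k :: nat and x y
  assume "j < 2" "k < 2" "j \<noteq> k" "x \<in> parity_part m U j" "y \<in> parity_part m U k"
  then have "cinner (orth_comp m U i x) (orth_comp m U i y) = 0" if "i < m" for i
    using that by (cases "i mod 2 = j") (auto simp: parity_part_def)
  then show "cinner x y = 0"
    by (simp add: cinner_eq_sum_orth_comp[OF od, of x y])
next
  fix x
  define part where "part j = (\<Sum>i<m. if i mod 2 = j then orth_comp m U i x else 0)" for j
  have "orth_comp m U i (part j) = 0" if "i < m" "i mod 2 \<noteq> j" for i j
  proof -
    note lin = orth_comp_clinear[OF od \<open>i < m\<close>]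
    have "orth_comp m U i (part j) =
        (\<Sum>l<m. if l mod 2 = j then orth_comp m U i (orth_comp m U l x) else 0)"
      unfolding part_def vec.linear_sum[OF lin] by (intro sum.cong refl) (simp add: vec.linear_0[OF lin])
    also have "\<dots> = 0"
      using that by (intro sum.neutral) (auto simp: orth_comp_of_mem[OF od _ orth_comp_in[OF od]])
    finally show ?thesis .
  qed
  then have "part j \<in> parity_part m U j" for j
    by (simp add: parity_part_def)
  moreover have "part 0 + part 1 = x"
  proof -
    have "part 0 + part 1 = (\<Sum>i<m. orth_comp m U i x)"
      unfolding part_def sum.distrib[symmetric] by (intro sum.cong) auto
    then show ?thesis
      by (simp add: orth_comp_sum[OF od])
  qed
  ultimately show "\<exists>u. (\<forall>i<2. u i \<in> parity_part m U i) \<and> x = (\<Sum>i<2. u i)"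
    by (intro exI[of _ part]) (simp add: numeral_2_eq_2)
qed

lemma parity_part_isotropic:
  assumes od: "orth_decomp m U" and cyc: "\<forall>i<m. \<forall>u\<in>U i. B *v u \<in> U (Suc i mod m)"
    and "even m" and u: "u \<in> parity_part m U j" and u': "u' \<in> parity_part m U j"
  shows "cinner u (B *v u') = 0"
proof -
  have "B *v u' = (\<Sum>l<m. B *v orth_comp m U l u')"
    by (simp add: orth_comp_sum[OF od] flip: vec.sum)
  then have "cinner u (B *v u') = (\<Sum>l<m. cinner u (B *v orth_comp m U l u'))"
    by (simp add: cinner_sum_right)
  also have "\<dots> = 0"
  proof (intro sum.neutral ballI)
    fix l assume "l \<in> {..<m}"
    define k where "k = Suc l mod m"
    have k: "k < m"
      using \<open>l \<in> {..<m}\<close> by (simp add: k_def)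
    have "k mod 2 = Suc l mod 2"
      using \<open>even m\<close> by (simp add: k_def mod_mod_cancel)
    then have "k mod 2 \<noteq> l mod 2"
      by presburger
    then have "orth_comp m U k u = 0 \<or> orth_comp m U l u' = 0"
      using u u' k \<open>l \<in> {..<m}\<close> by (auto simp: parity_part_def)
    moreover have "cinner u (B *v orth_comp m U l u')
        = cinner (orth_comp m U k u) (B *v orth_comp m U l u')"
      using cyc orth_comp_in[OF od] \<open>l \<in> {..<m}\<close>
      by (intro cinner_orth_comp_left[OF od k]) (simp add: k_def)
    ultimately show "cinner u (B *v orth_comp m U l u') = 0"
      by auto
  qed
  finally show ?thesis .
qed

lemma isotropic_2_decomp_if_even_cyclic_decomp:
  assumes "cyclic_decomp Bs m" and "even m" and "0 < m"
  shows "isotropic_2_decomp Bs"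
proof -
  obtain U where od: "orth_decomp m U"
    and cyc: "\<forall>i<m. \<forall>B\<in>Bs. \<forall>u\<in>U i. B *v u \<in> U (Suc i mod m)"
    using assms(1) by (auto simp: cyclic_decomp_def)
  have "2 \<le> m"
    using assms(2,3) by presburger
  then show ?thesis
    unfolding isotropic_2_decomp_def
    using orth_decomp_parity_part[OF od] parity_part_isotropic[OF od _ assms(2)] cyc by blast
qed

lemma cyclic_decomp_2_if_isotropic_2_decomp:
  assumes "isotropic_2_decomp Bs"
  shows "cyclic_decomp Bs 2"
proof -
  obtain V where od: "orth_decomp 2 V"
    and iso: "\<forall>i<2. \<forall>u\<in>V i. \<forall>u'\<in>V i. \<forall>B\<in>Bs. cinner u (B *v u') = 0"
    using assms by (auto simp: isotropic_2_decomp_def)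
  have "B *v v \<in> V (Suc j mod 2)" if j: "j < 2" and "B \<in> Bs" and "v \<in> V j" for j B v
  proof -
    have "orth_comp 2 V j (B *v v) = 0"
      using iso that by (intro orth_comp_eq_0[OF od j]) blast
    moreover have "(\<Sum>i<2. orth_comp 2 V i (B *v v)) = B *v v"
      by (rule orth_comp_sum[OF od])
    ultimately have "orth_comp 2 V (Suc j mod 2) (B *v v) = B *v v"
      using j by (auto simp: numeral_2_eq_2 less_Suc_eq)
    then show ?thesis
      using orth_comp_in[OF od, of "Suc j mod 2"] by (metis mod_less_divisor zero_less_numeral)
  qed
  then show ?thesis
    unfolding cyclic_decomp_def using od by blast
qed

section \<open>Positive matrices and the fixed state\<close>

lemma hermitian_cinner: "adj A = A \<Longrightarrow> cinner x (A *v y) = cinner (A *v x) y"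
  by (metis cinner_adj)

lemma psd_hermitian:
  assumes "psd A"
  shows "adj A = A"
proof -
  define q where "q z = cinner z (A *v z)" for z
  have Im_q: "Im (q z) = 0" for z
    using assms by (simp add: psd_def q_def)
  have polar: "cinner x (A *v y) = cnj (cinner y (A *v x))" for x y
  proof -
    define a where "a = cinner x (A *v y)"
    define b where "b = cinner y (A *v x)"
    have "q (x + y) = q x + a + b + q y"
      by (simp add: q_def a_def b_def matrix_vector_right_distrib cinner_add_left cinner_add_right)
    moreover have "q (x + \<i> *s y) = q x + \<i> * a - \<i> * b + q y"
      by (simp add: q_def a_def b_def cinner_add_left cinner_add_right
          vec.scale cinner_scale_left cinner_scale_right algebra_simps)
    ultimately have "Im (a + b) = 0" and "Re (a - b) = 0"
      using Im_q[of "x + y"] Im_q[of "x + \<i> *s y"] Im_q[of x] Im_q[of y] by simp_all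
    then show ?thesis
      by (simp add: a_def b_def complex_eq_iff)
  qed
  show ?thesis
  proof (rule matrix_eqI, rule cinner_eqI)
    fix x y
    have "cinner x (adj A *v y) = cnj (cinner y (A *v x))"
      by (simp add: cinner_adj_left[symmetric] cinner_commute[of _ "A *v x"])
    then show "cinner x (adj A *v y) = cinner x (A *v y)"
      by (simp add: polar[of x y])
  qed
qed

text \<open>Otherwise the form would be negative at \<open>x - t A x\<close> for small \<open>t > 0\<close>.\<close>
lemma psd_cinner_eq_0:
  assumes psd: "psd A" and q0: "cinner x (A *v x) = 0"
  shows "A *v x = 0"
proof (rule ccontr)
  assume "A *v x \<noteq> 0"
  define y where "y = A *v x"
  define N where "N = Re (cinner y y)"
  define Q where "Q = Re (cinner y (A *v y))"
  define t where "t = N / (Q + 1)"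
  have "cinner y y \<noteq> 0"
    using \<open>A *v x \<noteq> 0\<close> by (simp add: y_def)
  then have N: "N > 0"
    using cinner_self_nonneg[of y] Im_cinner_self[of y] by (auto simp: N_def complex_eq_iff)
  have Q: "Q \<ge> 0"
    using psd by (simp add: psd_def Q_def)
  have c1: "cinner x (A *v y) = cinner y y"
    using hermitian_cinner[OF psd_hermitian[OF psd], of x y] by (simp add: y_def)
  have c2: "cinner y (A *v x) = cinner y y"
    by (simp add: y_def)
  have "cinner (x - of_real t *s y) (A *v (x - of_real t *s y))
        = cinner x (A *v x) - of_real t * cinner x (A *v y) - of_real t * cinner y (A *v x)
          + of_real t * of_real t * cinner y (A *v y)"
    by (simp add: cinner_diff_left cinner_diff_right vec.scale
        cinner_scale_left cinner_scale_right algebra_simps)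
  also have "\<dots> = - 2 * of_real t * cinner y y + of_real t * of_real t * cinner y (A *v y)"
    using q0 c1 c2 by simp
  finally have eq: "cinner (x - of_real t *s y) (A *v (x - of_real t *s y))
      = - 2 * of_real t * cinner y y + of_real t * of_real t * cinner y (A *v y)" .
  have "0 \<le> Re (cinner (x - of_real t *s y) (A *v (x - of_real t *s y)))"
    using psd by (simp add: psd_def)
  then have "0 \<le> - 2 * t * N + t * (t * Q)"
    unfolding eq by (simp add: N_def Q_def)
  moreover have "t > 0"
    using N Q by (simp add: t_def)
  moreover have "t * Q < N"
    using N Q by (simp add: t_def field_simps)
  then have "t * (t * Q) < t * N"
    using \<open>t > 0\<close> by simp
  moreover have "t * N > 0"
    using \<open>t > 0\<close> N by simp
  ultimately show False
    by linarith
qed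

lemma cinner_axis: "cinner (axis i 1) w = w $ i"
proof -
  have "cinner (axis i 1) w = (\<Sum>k\<in>UNIV. if k = i then w$k else 0)"
    unfolding cinner_def axis_def by (rule sum.cong) auto
  then show ?thesis
    by simp
qed

lemma matrix_vector_mult_axis: "(A *v axis i 1) $ k = A $ k $ i"
proof -
  have "(A *v axis i 1) $ k = (\<Sum>j\<in>UNIV. A$k$j * (if j = i then 1 else 0))"
    by (simp add: matrix_vector_mult_def axis_def)
  also have "\<dots> = (\<Sum>j\<in>UNIV. if j = i then A$k$j else 0)"
    by (rule sum.cong) auto
  finally show ?thesis
    by simp
qed

lemma ctrace_eq_sum_cinner: "ctrace A = (\<Sum>i\<in>UNIV. cinner (axis i 1) (A *v axis i 1))"
  by (simp add: ctrace_def cinner_axis matrix_vector_mult_axis)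

lemma psd_ctrace: "psd A \<Longrightarrow> Im (ctrace A) = 0 \<and> 0 \<le> Re (ctrace A)"
  by (simp add: ctrace_eq_sum_cinner psd_def sum_nonneg)

lemma psd_ctrace_eq_0:
  assumes psd: "psd A" and "ctrace A = 0"
  shows "A = 0"
proof -
  have "Re (ctrace A) = 0"
    using assms(2) by simp
  then have "\<forall>i\<in>UNIV. Re (cinner (axis i 1) (A *v axis i 1)) = 0"
    using psd
    by (subst (asm) ctrace_eq_sum_cinner, subst (asm) Re_sum, subst (asm) sum_nonneg_eq_0_iff)
      (auto simp: psd_def)
  then have "cinner (axis i 1) (A *v axis i 1) = 0" for i
    using psd by (simp add: psd_def complex_eq_iff)
  then have "A *v axis i 1 = 0" for i
    using psd_cinner_eq_0[OF psd] by blast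
  then show ?thesis
    using matrix_vector_mult_axis[of A] by (simp add: vec_eq_iff)
qed

lemma mat_matrix_mult_entry: "(mat c ** A) $ i $ j = c * A $ i $ j"
proof -
  have "(mat c ** A) $ i $ j = (\<Sum>k\<in>UNIV. (if i = k then c else 0) * A $ k $ j)"
    by (simp add: matrix_matrix_mult_def mat_def)
  also have "\<dots> = (\<Sum>k\<in>UNIV. if i = k then c * A $ k $ j else 0)"
    by (rule sum.cong) auto
  finally show ?thesis
    by simp
qed

lemma ctrace_mat_mult: "ctrace (mat c ** A) = c * ctrace A"
  by (simp add: ctrace_def mat_matrix_mult_entry sum_distrib_left)

lemma posdef_cancel: "posdef \<rho> \<Longrightarrow> \<rho> *v z = 0 \<Longrightarrow> z = 0"
  unfolding posdef_def by (metis cinner_zero_right zero_complex.simps(1) less_irrefl)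

lemma channel_mat_mult: "channel Bs (mat c ** N) = mat c ** channel Bs N"
proof -
  have "B ** (mat c ** N) ** adj B = mat c ** (B ** N ** adj B)" for B
    by (simp add: matrix_mul_assoc mat_matrix_mult_commute[of c B])
  then show ?thesis
    by (simp add: channel_def matrix_mult_sum_right)
qed

lemma channel_sandwich:
  assumes "\<forall>B\<in>Bs. K ** B = B ** K \<and> K ** adj B = adj B ** K"
  shows "channel Bs (K ** R ** K) = K ** channel Bs R ** K"
proof -
  have "B ** (K ** R ** K) ** adj B = K ** (B ** R ** adj B) ** K" if "B \<in> Bs" for B
  proof -
    have "B ** (K ** R ** K) ** adj B = (B ** K) ** R ** (K ** adj B)"
      by (simp add: matrix_mul_assoc)
    also have "\<dots> = (K ** B) ** R ** (adj B ** K)"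
      using assms that by simp
    finally show ?thesis
      by (simp add: matrix_mul_assoc)
  qed
  then show ?thesis
    by (simp add: channel_def matrix_mult_sum_left matrix_mult_sum_right)
qed

lemma psd_sandwich:
  assumes "psd R" and "adj K = K"
  shows "psd (K ** R ** K)"
proof -
  have "cinner x ((K ** R ** K) *v x) = cinner (K *v x) (R *v (K *v x))" for x
    using hermitian_cinner[OF assms(2), of x "R *v (K *v x)"]
    by (simp add: matrix_vector_mul_assoc matrix_mul_assoc)
  then show ?thesis
    using assms(1) by (simp add: psd_def)
qed

definition fixed_state :: "(complex^'n^'n) set \<Rightarrow> complex^'n^'n" where
  "fixed_state Bs = (THE \<rho>. \<rho> \<in> density \<and> channel Bs \<rho> = \<rho>)"

lemma IQC_fixed_state:
  assumes "IQC Bs"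
  shows "fixed_state Bs \<in> density" and "channel Bs (fixed_state Bs) = fixed_state Bs"
    and "posdef (fixed_state Bs)"
proof -
  have "fixed_state Bs \<in> density \<and> channel Bs (fixed_state Bs) = fixed_state Bs"
    unfolding fixed_state_def by (rule theI') (use assms in \<open>simp add: IQC_def\<close>)
  then show "fixed_state Bs \<in> density" "channel Bs (fixed_state Bs) = fixed_state Bs"
    "posdef (fixed_state Bs)"
    using assms by (auto simp: IQC_def)
qed

lemma IQC_psd_fixed_point:
  assumes iqc: "IQC Bs" and psd: "psd N" and fixed: "channel Bs N = N"
  shows "N = mat (ctrace N) ** fixed_state Bs"
proof (cases "ctrace N = 0")
  case True
  then show ?thesis
    using psd_ctrace_eq_0[OF psd] by simp
next
  case False
  define c where "c = Re (ctrace N)"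
  have c: "ctrace N = of_real c" "c > 0"
    using psd_ctrace[OF psd] False by (auto simp: c_def complex_eq_iff)
  define \<sigma> where "\<sigma> = mat (1 / ctrace N) ** N"
  have "psd \<sigma>"
    using psd c by (simp add: psd_def \<sigma>_def mat_matrix_mult_vector cinner_scale_right)
  moreover have "ctrace \<sigma> = 1" and "channel Bs \<sigma> = \<sigma>"
    using False fixed by (simp_all add: \<sigma>_def ctrace_mat_mult channel_mat_mult)
  ultimately have "fixed_state Bs = \<sigma>"
    using iqc unfolding fixed_state_def IQC_def density_def by (intro the1_equality) auto
  then show ?thesis
    using False by (intro matrix_eqI) (simp add: \<sigma>_def mat_matrix_mult_vector)
qed

section \<open>Schur's lemma\<close>

lemma IQC_sandwich_fixed_state:
  assumes iqc: "IQC Bs" and "adj K = K" and "\<forall>B\<in>Bs. K ** B = B ** K \<and> K ** adj B = adj B ** K"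
  shows "K ** fixed_state Bs ** K = mat (ctrace (K ** fixed_state Bs ** K)) ** fixed_state Bs"
proof (rule IQC_psd_fixed_point[OF iqc psd_sandwich[OF _ assms(2)]])
  show "psd (fixed_state Bs)"
    using IQC_fixed_state(1)[OF iqc] by (simp add: density_def)
  show "channel Bs (K ** fixed_state Bs ** K) = K ** fixed_state Bs ** K"
    by (simp add: channel_sandwich[OF assms(3)] IQC_fixed_state(2)[OF iqc])
qed

lemma sandwich_shift_anticommutator:
  fixes H \<rho> :: "complex^'n^'n"
  assumes "H ** \<rho> ** H = mat t\<^sub>0 ** \<rho>" and "(H + mat 1) ** \<rho> ** (H + mat 1) = mat t\<^sub>1 ** \<rho>"
  shows "H ** \<rho> + \<rho> ** H = mat (t\<^sub>1 - t\<^sub>0 - 1) ** \<rho>"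
proof (rule matrix_eqI)
  fix x
  have "((H + mat 1) ** \<rho> ** (H + mat 1)) *v x
      = (H ** \<rho> ** H) *v x + (H ** \<rho> + \<rho> ** H) *v x + \<rho> *v x"
    by (simp add: matrix_vector_mul_assoc[symmetric] algebra_simps)
  then have "t\<^sub>1 *s (\<rho> *v x) = t\<^sub>0 *s (\<rho> *v x) + (H ** \<rho> + \<rho> ** H) *v x + \<rho> *v x"
    by (simp only: assms mat_matrix_mult_vector)
  then show "(H ** \<rho> + \<rho> ** H) *v x = mat (t\<^sub>1 - t\<^sub>0 - 1) ** \<rho> *v x"
    by (simp add: mat_matrix_mult_vector algebra_simps)
qed

lemma anticommuting_hermitian_eq_0:
  assumes \<rho>: "posdef \<rho>" and herm: "adj G = G" and anti: "G ** \<rho> + \<rho> ** G = 0"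
    and sandwich: "G ** \<rho> ** G = mat t ** \<rho>" and t: "Im t = 0" "0 \<le> Re t"
  shows "G = 0"
proof -
  have GG: "G *v (G *v x) = - (t *s x)" for x
  proof -
    have anti_v: "\<rho> *v (G *v y) = - (G *v (\<rho> *v y))" for y
      using arg_cong[OF anti, of "\<lambda>M. M *v y"]
      by (simp add: matrix_vector_mult_add_rdistrib matrix_vector_mul_assoc[symmetric] add_eq_0_iff)
    have "G *v (\<rho> *v (G *v x)) = (G ** \<rho> ** G) *v x"
      by (simp add: matrix_vector_mul_assoc matrix_mul_assoc)
    then have "G *v (\<rho> *v (G *v x)) = t *s (\<rho> *v x)"
      by (simp add: sandwich mat_matrix_mult_vector)
    then have "\<rho> *v (G *v (G *v x)) = - (t *s (\<rho> *v x))"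
      using anti_v[of "G *v x"] by simp
    then have "\<rho> *v (G *v (G *v x) + t *s x) = 0"
      by (simp add: matrix_vector_right_distrib vec.scale)
    then show ?thesis
      using posdef_cancel[OF \<rho>] by (simp add: eq_neg_iff_add_eq_0)
  qed
  have "G *v x = 0" for x
  proof -
    have "cinner (G *v x) (G *v x) = - (t * cinner x x)"
      by (simp add: hermitian_cinner[OF herm, symmetric] GG cinner_neg_right cinner_scale_right)
    then have "Re (cinner (G *v x) (G *v x)) = - (Re t * Re (cinner x x))"
      using t by simp
    moreover have "0 \<le> Re t * Re (cinner x x)"
      using t cinner_self_nonneg[of x] by simp
    ultimately have "cinner (G *v x) (G *v x) = 0"
      using cinner_self_nonneg[of "G *v x"] by (simp add: complex_eq_iff)
    then show ?thesis
      by simp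
  qed
  then show ?thesis
    by (intro matrix_eqI) simp
qed

lemma anticommutator_scalar_real:
  assumes "adj H = H" and "adj \<rho> = \<rho>" and "ctrace \<rho> = 1"
    and anti: "H ** \<rho> + \<rho> ** H = mat s ** \<rho>"
  shows "cnj s = s"
proof -
  have "adj (H ** \<rho> + \<rho> ** H) = H ** \<rho> + \<rho> ** H"
    using assms(1,2) by (simp add: adj_add adj_matrix_mult add.commute)
  then have "mat (cnj s) ** \<rho> = mat s ** \<rho>"
    using assms(2) by (simp add: anti adj_matrix_mult adj_mat mat_matrix_mult_commute)
  then have "ctrace (mat (cnj s) ** \<rho>) = ctrace (mat s ** \<rho>)"
    by simp
  then show ?thesis
    by (simp add: ctrace_mat_mult assms(3))
qed

lemma anticommutator_shift:
  fixes H \<rho> :: "complex^'n^'n"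
  assumes "H ** \<rho> + \<rho> ** H = mat s ** \<rho>"
  shows "(H + mat (- s / 2)) ** \<rho> + \<rho> ** (H + mat (- s / 2)) = 0"
proof -
  have "(H + mat (- s / 2)) ** \<rho> + \<rho> ** (H + mat (- s / 2))
      = (H ** \<rho> + \<rho> ** H) + (mat (- s / 2) ** \<rho> + mat (- s / 2) ** \<rho>)"
    by (simp add: matrix_add_ldistrib matrix_add_rdistrib mat_matrix_mult_commute[of _ \<rho>] add_ac)
  also have "\<dots> = mat (s + - s / 2 + - s / 2) ** \<rho>"
    by (simp add: assms mat_matrix_mult_add add.assoc)
  finally show ?thesis
    by simp
qed

text \<open>Schur's lemma for an irreducible channel: for Hermitian \<open>K\<close> commuting with the Kraus
  operators, \<open>K \<rho> K\<close> is again a positive fixed point, hence a multiple of the fixed state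
  \<open>\<rho>\<close>. Applied to \<open>K = H\<close> and \<open>K = H + 1\<close> this makes \<open>H - s/2\<close> anticommute with \<open>\<rho>\<close>.\<close>
lemma IQC_hermitian_commutant_scalar:
  assumes iqc: "IQC Bs" and herm: "adj H = H" and comm: "\<forall>B\<in>Bs. H ** B = B ** H"
  shows "\<exists>c. H = mat c"
proof -
  define \<rho> where "\<rho> = fixed_state Bs"
  have \<rho>: "psd \<rho>" "ctrace \<rho> = 1" "posdef \<rho>"
    using IQC_fixed_state[OF iqc] by (auto simp: \<rho>_def density_def)
  have comm_adj: "H ** adj B = adj B ** H" if "B \<in> Bs" for B
    using arg_cong[of _ _ adj, OF bspec[OF comm that]] by (simp add: adj_matrix_mult herm)
  define K where "K a = H + mat a" for a
  have K: "adj (K a) = K a" "\<forall>B\<in>Bs. K a ** B = B ** K a \<and> K a ** adj B = adj B ** K a"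
    if "cnj a = a" for a
    using that comm comm_adj
    by (auto simp: K_def herm adj_add adj_mat matrix_add_ldistrib matrix_add_rdistrib
        mat_matrix_mult_commute)
  define t where "t a = ctrace (K a ** \<rho> ** K a)" for a
  have sandwich: "K a ** \<rho> ** K a = mat (t a) ** \<rho>" if "cnj a = a" for a
    unfolding t_def \<rho>_def by (rule IQC_sandwich_fixed_state[OF iqc K[OF that]])
  define s where "s = t 1 - t 0 - 1"
  have anti: "H ** \<rho> + \<rho> ** H = mat s ** \<rho>"
    unfolding s_def using sandwich[of 0] sandwich[of 1]
    by (intro sandwich_shift_anticommutator) (simp_all add: K_def)
  define a where "a = - s / 2"
  have a: "cnj a = a"
    using anticommutator_scalar_real[OF herm psd_hermitian[OF \<rho>(1)] \<rho>(2) anti] by (simp add: a_def)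
  have "K a ** \<rho> + \<rho> ** K a = 0"
    unfolding K_def a_def by (rule anticommutator_shift[OF anti])
  moreover have "Im (t a) = 0" "0 \<le> Re (t a)"
    using psd_ctrace[OF psd_sandwich[OF \<rho>(1) K(1)[OF a]]] by (simp_all add: t_def)
  ultimately have "K a = 0"
    using anticommuting_hermitian_eq_0[OF \<rho>(3) K(1)[OF a] _ sandwich[OF a]] by blast
  then have "H = - mat a"
    by (simp add: K_def eq_neg_iff_add_eq_0)
  also have "- mat a = mat (- a)"
    by (simp add: vec_eq_iff mat_def)
  finally show ?thesis ..
qed

lemma IQC_star_commutant_scalar:
  assumes iqc: "IQC Bs" and comm: "\<forall>B\<in>Bs. A ** B = B ** A \<and> adj A ** B = B ** adj A"
  shows "\<exists>c. A = mat c"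
proof -
  define H\<^sub>1 where "H\<^sub>1 = A + adj A"
  define H\<^sub>2 where "H\<^sub>2 = mat \<i> ** (A - adj A)"
  have H\<^sub>1_vec: "H\<^sub>1 *v x = A *v x + adj A *v x" for x
    by (simp add: H\<^sub>1_def matrix_vector_mult_add_rdistrib)
  have H\<^sub>2_vec: "H\<^sub>2 *v x = \<i> *s (A *v x - adj A *v x)" for x
    by (simp add: H\<^sub>2_def mat_matrix_mult_vector matrix_vector_mult_diff_rdistrib)
  have "adj H\<^sub>1 = H\<^sub>1"
    by (simp add: H\<^sub>1_def adj_add add.commute)
  moreover have "\<forall>B\<in>Bs. H\<^sub>1 ** B = B ** H\<^sub>1"
    using comm by (simp add: H\<^sub>1_def matrix_add_ldistrib matrix_add_rdistrib)
  ultimately obtain a where a: "H\<^sub>1 = mat a"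
    using IQC_hermitian_commutant_scalar[OF iqc] by blast
  have "adj H\<^sub>2 = H\<^sub>2"
  proof (rule matrix_eqI)
    fix x
    have "adj H\<^sub>2 *v x = (- \<i>) *s (adj A *v x - A *v x)"
      by (simp add: H\<^sub>2_def adj_matrix_mult adj_mat adj_diff matrix_vector_mul_assoc[symmetric]
          mat_vector_mult vec.scale vec.neg matrix_vector_mult_diff_rdistrib)
    then show "adj H\<^sub>2 *v x = H\<^sub>2 *v x"
      by (simp add: H\<^sub>2_vec vec_eq_iff algebra_simps)
  qed
  moreover have "\<forall>B\<in>Bs. H\<^sub>2 ** B = B ** H\<^sub>2"
  proof
    fix B assume "B \<in> Bs"
    show "H\<^sub>2 ** B = B ** H\<^sub>2"
    proof (rule matrix_eqI)
      fix x
      have "H\<^sub>2 ** B *v x = \<i> *s ((A ** B) *v x - (adj A ** B) *v x)"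
        by (simp add: H\<^sub>2_vec flip: matrix_vector_mul_assoc)
      then show "H\<^sub>2 ** B *v x = B ** H\<^sub>2 *v x"
        using comm \<open>B \<in> Bs\<close>
        by (simp add: H\<^sub>2_vec matrix_vector_mul_assoc[symmetric] vec.scale vec.diff)
    qed
  qed
  ultimately obtain b where b: "H\<^sub>2 = mat b"
    using IQC_hermitian_commutant_scalar[OF iqc] by blast
  have "A *v x = ((a - \<i> * b) / 2) *s x" for x
  proof -
    have sum: "A *v x + adj A *v x = a *s x" and diff: "\<i> *s (A *v x - adj A *v x) = b *s x"
      using H\<^sub>1_vec[of x] H\<^sub>2_vec[of x] by (simp_all add: a b mat_vector_mult)
    have "(A *v x) $ k = (a - \<i> * b) / 2 * x $ k" for k
    proof -
      have "(a - \<i> * b) * x $ k = ((A *v x) $ k + (adj A *v x) $ k)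
          - \<i> * (\<i> * ((A *v x) $ k - (adj A *v x) $ k))"
        using arg_cong[OF sum, of "\<lambda>v. v $ k"] arg_cong[OF diff, of "\<lambda>v. v $ k"]
        by (simp add: algebra_simps)
      also have "\<dots> = 2 * (A *v x) $ k"
        by (simp add: algebra_simps)
      finally show ?thesis
        by simp
    qed
    then show ?thesis
      by (simp add: vec_eq_iff)
  qed
  then have "A = mat ((a - \<i> * b) / 2)"
    by (intro matrix_eqI) (simp add: mat_vector_mult)
  then show ?thesis ..
qed

lemma IQC_commutant_scalar:
  assumes iqc: "IQC Bs" and lin: "clinear X"
    and adjoint: "\<And>x y. cinner (X x) y = cinner x (X' y)"
    and comm: "\<And>B x. B \<in> Bs \<Longrightarrow> X (B *v x) = B *v X x"
    and comm': "\<And>B x. B \<in> Bs \<Longrightarrow> X' (B *v x) = B *v X' x"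
  shows "\<exists>c. \<forall>x. X x = c *s x"
proof -
  define A where "A = matrix X"
  have A: "A *v x = X x" for x
    by (simp add: A_def matrix_works[OF lin])
  have adj_A: "adj A *v x = X' x" for x
    by (rule cinner_eqI) (simp add: cinner_adj_left[symmetric] A adjoint)
  have "\<forall>B\<in>Bs. A ** B = B ** A \<and> adj A ** B = B ** adj A"
    by (auto intro!: matrix_eqI simp: matrix_vector_mul_assoc[symmetric] A adj_A comm comm')
  then obtain c where "A = mat c"
    using IQC_star_commutant_scalar[OF iqc] by blast
  then show ?thesis
    by (intro exI[of _ c]) (simp add: A[symmetric] mat_vector_mult)
qed

section \<open>Odd period\<close>

lemma sum_lessThan_shift_periodic:
  fixes h :: "nat \<Rightarrow> 'a::comm_monoid_add"
  assumes "\<And>k. h (k + p) = h k"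
  shows "(\<Sum>i<p. h (i + c)) = (\<Sum>i<p. h i)"
proof (induction c)
  case (Suc c)
  have "(\<Sum>i<p. h (Suc i + c)) = (\<Sum>i<p. h (i + c))"
  proof (cases p)
    case (Suc n)
    have "(\<Sum>i<Suc n. h (Suc i + c)) = (\<Sum>i<n. h (Suc i + c)) + h (Suc n + c)"
      by (rule sum.lessThan_Suc)
    also have "\<dots> = h c + (\<Sum>i<n. h (Suc i + c))"
      using assms[of c] Suc by (simp add: add.commute)
    also have "\<dots> = (\<Sum>i<Suc n. h (i + c))"
      by (subst sum.lessThan_Suc_shift) simp
    finally show ?thesis
      using Suc by simp
  qed simp
  then show ?case
    using Suc by simp
qed simp

lemma sum_lessThan_add: "(\<Sum>r<m + n. f r) = (\<Sum>r<m. f r) + (\<Sum>r<n. f (r + (m::nat)))"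
  by (induct n) (auto simp: add.commute add.left_commute)

lemma odd_double_mod_eq_0:
  assumes "odd (p::nat)" and "j < p" and "(j + j) mod p = 0"
  shows "j = 0"
proof -
  have "p dvd 2 * j"
    using assms(3) by (simp add: mult_2 mod_eq_0_iff_dvd)
  moreover have "coprime p 2"
    using assms(1) by (simp add: coprime_commute)
  ultimately have "p dvd j"
    by (simp add: coprime_dvd_mult_right_iff)
  then show ?thesis
    using assms(2) dvd_imp_le by fastforce
qed

lemma odd_mod_double_eqI:
  "odd (p::nat) \<Longrightarrow> r < 2 * p \<Longrightarrow> s < 2 * p \<Longrightarrow> r mod p = s mod p \<Longrightarrow> r mod 2 = s mod 2 \<Longrightarrow> r = s"
  by (metis mod_double_nat mod_less odd_add odd_iff_mod_2_eq_one)

locale odd_cycle_with_grading =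
  fixes Bs :: "(complex^'n^'n) set" and U V :: "nat \<Rightarrow> (complex^'n) set" and p :: nat
  assumes iqc: "IQC Bs"
    and odU: "orth_decomp p U" and cycU: "\<forall>i<p. \<forall>B\<in>Bs. \<forall>u\<in>U i. B *v u \<in> U (Suc i mod p)"
    and odV: "orth_decomp 2 V" and cycV: "\<forall>j<2. \<forall>B\<in>Bs. \<forall>v\<in>V j. B *v v \<in> V (Suc j mod 2)"
    and odd_p: "odd p"
begin

lemma p_pos: "0 < p"
  using odd_p by (simp add: odd_pos)

lemma mod_p_less: "k mod p < p"
  using p_pos by simp

definition Ucomp :: "nat \<Rightarrow> complex^'n \<Rightarrow> complex^'n" where
  "Ucomp k = orth_comp p U (k mod p)"

lemma Ucomp_in: "Ucomp k x \<in> U (k mod p)"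
  by (simp add: Ucomp_def orth_comp_in[OF odU mod_p_less])

lemma Ucomp_sum: "(\<Sum>k<p. Ucomp k x) = x"
  by (simp add: Ucomp_def orth_comp_sum[OF odU])

lemma Ucomp_clinear: "clinear (Ucomp k)"
  unfolding Ucomp_def by (rule orth_comp_clinear[OF odU mod_p_less])

lemma Ucomp_periodic: "Ucomp (k + p) = Ucomp k"
  by (simp add: Ucomp_def)

lemma Ucomp_shift: "B \<in> Bs \<Longrightarrow> Ucomp (Suc k) (B *v x) = B *v Ucomp k x"
  using orth_comp_cyclic_shift[OF odU _ mod_p_less, of B k x] cycU by (simp add: Ucomp_def mod_Suc_eq)

lemma Ucomp_self_adjoint: "cinner (Ucomp k x) y = cinner x (Ucomp k y)"
  unfolding Ucomp_def by (rule orth_comp_self_adjoint[OF odU mod_p_less])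

lemma Ucomp_of_mem: "i < p \<Longrightarrow> u \<in> U i \<Longrightarrow> Ucomp k u = (if k mod p = i then u else 0)"
  unfolding Ucomp_def by (rule orth_comp_of_mem[OF odU _ _ mod_p_less])

lemma V_comp_swap:
  assumes "B \<in> Bs"
  shows "orth_comp 2 V 1 (B *v x) = B *v orth_comp 2 V 0 x"
    and "orth_comp 2 V 0 (B *v x) = B *v orth_comp 2 V 1 x"
proof -
  have cyc: "\<forall>i<2. \<forall>u\<in>V i. B *v u \<in> V (Suc i mod 2)"
    using cycV assms by blast
  show "orth_comp 2 V 1 (B *v x) = B *v orth_comp 2 V 0 x"
    "orth_comp 2 V 0 (B *v x) = B *v orth_comp 2 V 1 x"
    using orth_comp_cyclic_shift[OF odV cyc, of 0 x] orth_comp_cyclic_shift[OF odV cyc, of 1 x]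
    by simp_all
qed

definition grading :: "complex^'n \<Rightarrow> complex^'n" where
  "grading x = orth_comp 2 V 0 x - orth_comp 2 V 1 x"

lemma grading_clinear: "clinear grading"
  unfolding grading_def[abs_def]
  by (intro vec.linear_compose_sub orth_comp_clinear[OF odV]) simp_all

lemma grading_anticommute: "B \<in> Bs \<Longrightarrow> grading (B *v x) = - (B *v grading x)"
  unfolding grading_def by (simp only: V_comp_swap) (simp add: matrix_vector_mult_diff_distrib)

lemma grading_self_adjoint: "cinner (grading x) y = cinner x (grading y)"
  by (simp add: grading_def cinner_diff_left cinner_diff_right orth_comp_self_adjoint[OF odV])

lemma grading_grading: "grading (grading x) = x"
proof -
  have "orth_comp 2 V i (orth_comp 2 V j x) = (if i = j then orth_comp 2 V j x else 0)"
    if "i < 2" "j < 2" for i j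
    using that by (simp add: orth_comp_of_mem[OF odV _ orth_comp_in[OF odV]])
  then have "grading (grading x) = orth_comp 2 V 0 x + orth_comp 2 V 1 x"
    by (simp add: grading_def vec.linear_diff[OF orth_comp_clinear[OF odV]])
  also have "\<dots> = x"
    using orth_comp_sum[OF odV, of x] by (simp add: numeral_2_eq_2)
  finally show ?thesis .
qed

text \<open>Compressions of the grading to the blocks \<open>U (i + b) \<rightarrow> U (i + a)\<close>; composed with the
  grading they commute with the Kraus operators, so Schur's lemma applies to them.\<close>
definition block :: "nat \<Rightarrow> nat \<Rightarrow> complex^'n \<Rightarrow> complex^'n" where
  "block a b x = (\<Sum>i<p. Ucomp (i + a) (grading (Ucomp (i + b) x)))"

lemma block_clinear: "clinear (block a b)"
proof -
  have "clinear (Ucomp (i + a) \<circ> (grading \<circ> Ucomp (i + b)))" for i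
    using Vector_Spaces.linear_compose[OF
        Vector_Spaces.linear_compose[OF Ucomp_clinear grading_clinear] Ucomp_clinear] .
  then show ?thesis
    unfolding block_def[abs_def] by (intro vec.linear_compose_sum ballI) (simp add: o_def)
qed

lemma block_anticommute:
  assumes B: "B \<in> Bs"
  shows "block a b (B *v x) = - (B *v block a b x)"
proof -
  define h where "h k = Ucomp (k + a) (grading (Ucomp (k + b) x))" for k
  have "Ucomp (i + a) (grading (Ucomp (i + b) (B *v x))) = - (B *v h (i + (p - 1)))" for i
  proof -
    have shift: "i + c + p = Suc (i + (p - 1) + c)" for c
      using p_pos by simp
    have "Ucomp (i + b) (B *v x) = B *v Ucomp (i + (p - 1) + b) x"
      using Ucomp_periodic[of "i + b"] Ucomp_shift[OF B] by (metis shift)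
    then have "Ucomp (i + a) (grading (Ucomp (i + b) (B *v x)))
        = - Ucomp (i + a + p) (B *v grading (Ucomp (i + (p - 1) + b) x))"
      by (simp add: grading_anticommute[OF B] vec.linear_neg[OF Ucomp_clinear] Ucomp_periodic)
    also have "\<dots> = - (B *v h (i + (p - 1)))"
      unfolding shift Ucomp_shift[OF B] by (simp add: h_def add_ac)
    finally show ?thesis .
  qed
  then have "block a b (B *v x) = - (B *v (\<Sum>i<p. h (i + (p - 1))))"
    by (simp add: block_def sum_negf vec.sum)
  also have "(\<Sum>i<p. h (i + (p - 1))) = (\<Sum>i<p. h i)"
  proof (rule sum_lessThan_shift_periodic)
    have "(k + p + c) mod p = (k + c) mod p" for k c
      by (metis add.commute add.left_commute mod_add_self2)
    then show "h (k + p) = h k" for k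
      by (simp add: h_def Ucomp_def)
  qed
  finally show ?thesis
    by (simp add: block_def h_def)
qed

lemma block_adjoint: "cinner (block a b x) y = cinner x (block b a y)"
  by (simp add: block_def cinner_sum_left cinner_sum_right Ucomp_self_adjoint grading_self_adjoint)

lemma block_of_mem:
  assumes "i < p" and "u \<in> U i"
  shows "block k 0 u = Ucomp (i + k) (grading u)"
proof -
  have "block k 0 u = (\<Sum>l<p. Ucomp (l + k) (grading (Ucomp l u)))"
    by (simp add: block_def)
  also have "\<dots> = Ucomp (i + k) (grading (Ucomp i u))"
    using assms by (intro sum_eq_single)
      (auto simp: Ucomp_of_mem vec.linear_0[OF grading_clinear] vec.linear_0[OF Ucomp_clinear])
  finally show ?thesis
    using Ucomp_of_mem[OF assms, of i] assms(1) by simp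
qed

lemma block_scalar: "\<exists>c. \<forall>x. block k 0 x = c *s grading x"
proof -
  have "\<exists>c. \<forall>x. (block k 0 \<circ> grading) x = c *s x"
  proof (rule IQC_commutant_scalar[OF iqc, where X' = "grading \<circ> block 0 k"])
    show "clinear (block k 0 \<circ> grading)"
      by (rule Vector_Spaces.linear_compose[OF grading_clinear block_clinear])
    show "cinner ((block k 0 \<circ> grading) x) y = cinner x ((grading \<circ> block 0 k) y)" for x y
      by (simp add: block_adjoint grading_self_adjoint)
    show "(block k 0 \<circ> grading) (B *v x) = B *v (block k 0 \<circ> grading) x" if "B \<in> Bs" for B x
      using that by (simp add: grading_anticommute block_anticommute vec.linear_neg[OF block_clinear])
    show "(grading \<circ> block 0 k) (B *v x) = B *v (grading \<circ> block 0 k) x" if "B \<in> Bs" for B x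
      using that by (simp add: grading_anticommute block_anticommute vec.linear_neg[OF grading_clinear])
  qed
  then obtain c where "\<And>x. block k 0 (grading x) = c *s x"
    by auto
  then have "block k 0 x = c *s grading x" for x
    by (metis grading_grading)
  then show ?thesis
    by blast
qed

lemma grading_shifts_components:
  obtains j where "j < p" and "\<And>l w. l < p \<Longrightarrow> w \<in> U l \<Longrightarrow> grading w \<in> U ((l + j) mod p)"
proof -
  obtain u where u: "u \<in> U 0" "u \<noteq> 0"
    using orth_decomp_ex_nonzero[OF odU p_pos] by blast
  have "grading u \<noteq> 0"
    using u grading_grading[of u] vec.linear_0[OF grading_clinear] by metis
  then obtain j where j: "j < p" "Ucomp j (grading u) \<noteq> 0"
    using Ucomp_sum[of "grading u"] by (metis (no_types, lifting) lessThan_iff sum.neutral)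
  obtain c where c: "\<And>x. block j 0 x = c *s grading x"
    using block_scalar by blast
  have "c \<noteq> 0"
    using j(2) c[of u] block_of_mem[OF p_pos u(1)] by auto
  have "grading w \<in> U ((l + j) mod p)" if "l < p" "w \<in> U l" for l w
  proof -
    have "c *s grading w \<in> U ((l + j) mod p)"
      using c[of w] block_of_mem[OF that] Ucomp_in by metis
    then have "(1 / c) *s (c *s grading w) \<in> U ((l + j) mod p)"
      using vec.subspace_scale[OF orth_decomp_subspace[OF odU mod_p_less]] by blast
    then show ?thesis
      using \<open>c \<noteq> 0\<close> by simp
  qed
  with j(1) that show ?thesis
    by blast
qed

text \<open>Since the grading is an involution, the shift \<open>j\<close> above satisfies \<open>2 j \<equiv> 0 (mod p)\<close>,
  so \<open>j = 0\<close> as \<open>p\<close> is odd.\<close>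
lemma grading_preserves_components:
  assumes "i < p" and "u \<in> U i"
  shows "grading u \<in> U i"
proof -
  obtain j where j: "j < p"
    and shift: "\<And>l w. l < p \<Longrightarrow> w \<in> U l \<Longrightarrow> grading w \<in> U ((l + j) mod p)"
    using grading_shifts_components by blast
  obtain u\<^sub>0 where u\<^sub>0: "u\<^sub>0 \<in> U 0" "u\<^sub>0 \<noteq> 0"
    using orth_decomp_ex_nonzero[OF odU p_pos] by blast
  have "grading u\<^sub>0 \<in> U j"
    using shift[OF p_pos u\<^sub>0(1)] j by simp
  then have "u\<^sub>0 \<in> U ((j + j) mod p)"
    using shift[OF j] grading_grading[of u\<^sub>0] by metis
  then have "(j + j) mod p = 0"
    using orth_decomp_orthogonal[OF odU mod_p_less p_pos, of "j + j" u\<^sub>0 u\<^sub>0] u\<^sub>0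
    by (cases "(j + j) mod p = 0") auto
  then have "j = 0"
    by (rule odd_double_mod_eq_0[OF odd_p j])
  then show ?thesis
    using shift[OF assms] assms(1) by simp
qed

lemma V_comp_preserves_components:
  assumes "i < p" and "u \<in> U i" and "j < 2"
  shows "orth_comp 2 V j u \<in> U i"
proof -
  have "u = orth_comp 2 V 0 u + orth_comp 2 V 1 u"
    using orth_comp_sum[OF odV, of u] by (simp add: numeral_2_eq_2)
  then have "orth_comp 2 V 0 u = (1/2) *s (u + grading u)"
    and "orth_comp 2 V 1 u = (1/2) *s (u - grading u)"
    unfolding grading_def by (simp_all add: vec_eq_iff field_simps)
  moreover note S = orth_decomp_subspace[OF odU assms(1)]
  ultimately show ?thesis
    using assms grading_preserves_components[OF assms(1,2)]
    by (auto simp: less_2_cases_iff vec.subspace_scale[OF S] vec.subspace_add[OF S]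
        vec.subspace_diff[OF S])
qed

definition refined :: "nat \<Rightarrow> (complex^'n) set" where
  "refined r = U (r mod p) \<inter> V (r mod 2)"

lemma refined_subspace: "vec.subspace (refined r)"
  unfolding refined_def
  by (intro vec.subspace_inter orth_decomp_subspace[OF odU mod_p_less] orth_decomp_subspace[OF odV])
    simp

lemma refined_shift:
  assumes "w \<in> refined r" and "B \<in> Bs"
  shows "B *v w \<in> refined (Suc r)"
proof -
  have "B *v w \<in> U (Suc (r mod p) mod p)"
    using cycU mod_p_less assms by (auto simp: refined_def)
  moreover have "B *v w \<in> V (Suc (r mod 2) mod 2)"
    using cycV assms by (auto simp: refined_def)
  ultimately show ?thesis
    by (simp add: refined_def mod_Suc_eq)
qed

lemma refined_mod: "refined (r mod (2 * p)) = refined r"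
  by (simp add: refined_def mod_mod_cancel)

text \<open>\<open>U 0\<close> meets \<open>V 0\<close> or \<open>V 1\<close> nontrivially, and a nonzero vector of \<open>refined r\<close> is moved to
  a nonzero vector of \<open>refined (r + 1)\<close> by some Kraus operator.\<close>
lemma refined_ex_nonzero: "\<exists>w\<in>refined r. w \<noteq> 0"
proof -
  have kraus: "(\<Sum>B\<in>Bs. adj B ** B) = mat 1"
    using iqc by (simp add: IQC_def)
  obtain u where u: "u \<in> U 0" "u \<noteq> 0"
    using orth_decomp_ex_nonzero[OF odU] p_pos by blast
  obtain j where j: "j < 2" "orth_comp 2 V j u \<noteq> 0"
  proof (cases "orth_comp 2 V 0 u = 0")
    case True
    then have "orth_comp 2 V 1 u \<noteq> 0"
      using u(2) orth_comp_sum[OF odV, of u] by (auto simp: numeral_2_eq_2)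
    then show ?thesis
      using that[of 1] by simp
  qed (use that[of 0] in simp)
  have "orth_comp 2 V j u \<in> refined (j * p)"
    using V_comp_preserves_components[OF p_pos u(1) j(1)] orth_comp_in[OF odV j(1)] j(1) odd_p
    by (auto simp: refined_def less_2_cases_iff odd_iff_mod_2_eq_one)
  then have start: "\<exists>w\<in>refined (j * p). w \<noteq> 0"
    using j(2) by blast
  have "\<exists>w\<in>refined (j * p + t). w \<noteq> 0" for t
  proof (induction t)
    case (Suc t)
    then obtain w where "w \<in> refined (j * p + t)" "w \<noteq> 0"
      by blast
    moreover obtain B where "B \<in> Bs" "B *v w \<noteq> 0"
      using kraus_ex_nonzero[OF kraus \<open>w \<noteq> 0\<close>] by blast
    ultimately show ?case
      using refined_shift by fastforce
  qed (use start in simp)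
  moreover have "j * p \<le> r + 2 * p"
    using j(1) by (auto simp: less_2_cases_iff)
  ultimately show ?thesis
    using refined_mod[of r] refined_mod[of "r + 2 * p"] by (metis le_add_diff_inverse mod_add_self2)
qed

lemma orth_decomp_refined: "orth_decomp (2 * p) refined"
  unfolding orth_decomp_def
proof (intro conjI allI impI ballI)
  fix r assume "r < 2 * p"
  show "csubspace (refined r)"
    by (simp add: csubspace_iff refined_subspace)
  show "refined r \<noteq> {0}"
    using refined_ex_nonzero[of r] by blast
next
  fix r s u v assume rs: "r < 2 * p" "s < 2 * p" "r \<noteq> s" and "u \<in> refined r" "v \<in> refined s"
  show "cinner u v = 0"
  proof (cases "r mod p = s mod p")
    case True
    then have "r mod 2 \<noteq> s mod 2"
      using odd_mod_double_eqI[OF odd_p rs(1,2)] rs(3) by blast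
    then show ?thesis
      using orth_decomp_orthogonal[OF odV, of "r mod 2" "s mod 2" u v]
        \<open>u \<in> refined r\<close> \<open>v \<in> refined s\<close>
      by (simp add: refined_def)
  next
    case False
    then show ?thesis
      using orth_decomp_orthogonal[OF odU mod_p_less mod_p_less False, of u v]
        \<open>u \<in> refined r\<close> \<open>v \<in> refined s\<close>
      by (simp add: refined_def)
  qed
next
  fix x
  define w where "w r = orth_comp 2 V (r mod 2) (Ucomp r x)" for r
  have "w r \<in> refined r" for r
    using V_comp_preserves_components[OF mod_p_less Ucomp_in] orth_comp_in[OF odV]
    by (simp add: w_def refined_def)
  moreover have "w r + w (r + p) = Ucomp r x" for r
  proof -
    have "w r + w (r + p) = orth_comp 2 V 0 (Ucomp r x) + orth_comp 2 V 1 (Ucomp r x)"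
    proof (cases "even r")
      case True
      then have "r mod 2 = 0" "(r + p) mod 2 = 1"
        using odd_p by presburger+
      then show ?thesis
        by (simp add: w_def Ucomp_periodic)
    next
      case False
      then have "r mod 2 = 1" "(r + p) mod 2 = 0"
        using odd_p by presburger+
      then show ?thesis
        by (simp add: w_def Ucomp_periodic)
    qed
    then show ?thesis
      using orth_comp_sum[OF odV, of "Ucomp r x"] by (simp add: numeral_2_eq_2)
  qed
  then have "(\<Sum>r<2 * p. w r) = x"
    by (simp add: mult_2 sum_lessThan_add Ucomp_sum flip: sum.distrib)
  ultimately show "\<exists>u. (\<forall>r<2 * p. u r \<in> refined r) \<and> x = (\<Sum>r<2 * p. u r)"
    by metis
qed

lemma cyclic_decomp_double: "cyclic_decomp Bs (2 * p)"
  unfolding cyclic_decomp_def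
  using orth_decomp_refined refined_shift refined_mod by metis

end

lemma odd_cyclic_decomp_double:
  assumes "IQC Bs" and "cyclic_decomp Bs p" and "cyclic_decomp Bs 2" and "odd p"
  shows "cyclic_decomp Bs (2 * p)"
proof -
  obtain U V where "orth_decomp p U" "\<forall>i<p. \<forall>B\<in>Bs. \<forall>u\<in>U i. B *v u \<in> U (Suc i mod p)"
    and "orth_decomp 2 V" "\<forall>j<2. \<forall>B\<in>Bs. \<forall>v\<in>V j. B *v v \<in> V (Suc j mod 2)"
    using assms(2,3) by (auto simp: cyclic_decomp_def)
  then interpret odd_cycle_with_grading Bs U V p
    using assms(1,4) by unfold_locales
  show ?thesis
    by (rule cyclic_decomp_double)
qed

theorem lemma11p4:
  fixes Bs :: "(complex^'n^'n) set"
  assumes "IQC Bs"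
  shows "isotropic_2_decomp Bs \<longleftrightarrow> even (period Bs)"
proof
  assume "isotropic_2_decomp Bs"
  show "even (period Bs)"
  proof (rule ccontr)
    assume "odd (period Bs)"
    then have "cyclic_decomp Bs (2 * period Bs)"
      using odd_cyclic_decomp_double[OF assms cyclic_decomp_period]
        cyclic_decomp_2_if_isotropic_2_decomp[OF \<open>isotropic_2_decomp Bs\<close>] by blast
    then show False
      using cyclic_decomp_le_period period_pos[of Bs] by fastforce
  qed
next
  assume "even (period Bs)"
  then show "isotropic_2_decomp Bs"
    by (rule isotropic_2_decomp_if_even_cyclic_decomp[OF cyclic_decomp_period _ period_pos])
qed

end
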